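(* For every permutation $w\in S_n$, $$|B(w)|+|C(w)|-1 \le |R(w)| \le |B(w)|\cdot|C(w)|.$$
   Context: $S_n$ is generated by the adjacent transpositions $s_1,\dots,s_{n-1}$. A reduced word for $w$ is a word $i_1\cdots i_k$ with $w=s_{i_1}\cdots s_{i_k}$ and $k$ minimal; $R(w)$ is the set of reduced words. A braid move replaces a factor (consecutive letters) $i(i+1)i$ by $(i+1)i(i+1)$ or vice versa; a commutation move replaces a factor $ij$ with $|i-j|>1$ by $ji$. $B(w)$ (resp. $C(w)$) is the set of equivalence classes of $R(w)$ under sequences of braid moves (resp. commutation moves), called braid classes (resp. commutation classes). *)

theory Defs
  imports "HOL-Combinatorics.Combinatorics"
begin

definition simple_transp :: "nat \<Rightarrow> nat \<Rightarrow> nat" where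
  "simple_transp i = transpose i (Suc i)"

definition word_perm :: "nat list \<Rightarrow> (nat \<Rightarrow> nat)" where
  "word_perm ws = foldr (\<lambda>i f. simple_transp i \<circ> f) ws id"

definition gen_word :: "nat \<Rightarrow> nat list \<Rightarrow> bool" where
  "gen_word n ws \<longleftrightarrow> set ws \<subseteq> {1..<n}"

definition perm_length :: "nat \<Rightarrow> (nat \<Rightarrow> nat) \<Rightarrow> nat" where
  "perm_length n w = (LEAST k. \<exists>ws. gen_word n ws \<and> word_perm ws = w \<and> length ws = k)"

definition reduced_words :: "nat \<Rightarrow> (nat \<Rightarrow> nat) \<Rightarrow> nat list set" where
  "reduced_words n w = {ws. gen_word n ws \<and> word_perm ws = w \<and> length ws = perm_length n w}"

definition braid_move :: "nat list \<Rightarrow> nat list \<Rightarrow> bool" where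
  "braid_move u v \<longleftrightarrow> (\<exists>x y i.
      (u = x @ [i, Suc i, i] @ y \<and> v = x @ [Suc i, i, Suc i] @ y) \<or>
      (u = x @ [Suc i, i, Suc i] @ y \<and> v = x @ [i, Suc i, i] @ y))"

definition comm_move :: "nat list \<Rightarrow> nat list \<Rightarrow> bool" where
  "comm_move u v \<longleftrightarrow> (\<exists>x y i j. (Suc i < j \<or> Suc j < i) \<and>
      u = x @ [i, j] @ y \<and> v = x @ [j, i] @ y)"

definition braid_classes :: "nat \<Rightarrow> (nat \<Rightarrow> nat) \<Rightarrow> nat list set set" where
  "braid_classes n w = reduced_words n w // {(u, v). braid_move\<^sup>*\<^sup>* u v}"

definition comm_classes :: "nat \<Rightarrow> (nat \<Rightarrow> nat) \<Rightarrow> nat list set set" where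
  "comm_classes n w = reduced_words n w // {(u, v). comm_move\<^sup>*\<^sup>* u v}"

end

theory Submission imports Defs begin

text \<open>The lower bound comes from Matsumoto's theorem: any two reduced words of \<open>w\<close> are joined
  by braid and commutation moves, and each move preserves the braid class or the commutation
  class. Regarding a reduced word as an edge from its braid class to its commutation class thus
  gives a connected bipartite graph with \<open>|B(w)| + |C(w)|\<close> vertices and \<open>|R(w)|\<close> edges.

  The upper bound says that a reduced word is determined by its two classes. Label each letter
  of a reduced word by the inversion of \<open>w\<close> (a pair of positions) that it creates; every inversion
  occurs exactly once. A commutation move swaps two adjacent disjoint labels and a braid move
  reverses three pairwise intersecting ones. So the commutation class fixes the relative order
  of intersecting labels, the braid class that of disjoint labels, and together they fix the
  sequence of labels, which in turn determines the word.\<close>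

lemma simple_transp_apply_self [simp]: "simple_transp i i = Suc i"
  and simple_transp_apply_Suc [simp]: "simple_transp i (Suc i) = i"
  and simple_transp_apply_other [simp]: "x \<noteq> i \<Longrightarrow> x \<noteq> Suc i \<Longrightarrow> simple_transp i x = x"
  by (simp_all add: simple_transp_def)

lemma simple_transp_involutive [simp]: "simple_transp i (simple_transp i x) = x"
  by (simp add: simple_transp_def transpose_def)

lemma simple_transp_comp_cancel [simp]: "simple_transp i \<circ> (simple_transp i \<circ> f) = f"
  by (simp add: fun_eq_iff)

lemma bij_simple_transp: "bij (simple_transp i)"
  by (rule o_bij[of "simple_transp i"]) (simp_all add: fun_eq_iff)

lemma inv_simple_transp [simp]: "inv (simple_transp i) = simple_transp i"
  by (rule inv_unique_comp) (simp_all add: fun_eq_iff)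

lemma simple_transp_permutes: "i \<in> {1..<n} \<Longrightarrow> simple_transp i permutes {1..n}"
  unfolding simple_transp_def by (rule permutes_swap_id) auto

lemma vimage_simple_transp: "simple_transp i -` {a, b} = {simple_transp i a, simple_transp i b}"
  by (auto simp: simple_transp_def transpose_def split: if_splits)

lemma simple_transp_commute:
  "Suc i < j \<or> Suc j < i \<Longrightarrow>
    simple_transp i \<circ> (simple_transp j \<circ> f) = simple_transp j \<circ> (simple_transp i \<circ> f)"
  by (auto simp: simple_transp_def transpose_def fun_eq_iff)

lemma simple_transp_braid:
  "simple_transp i \<circ> (simple_transp (Suc i) \<circ> (simple_transp i \<circ> f)) =
    simple_transp (Suc i) \<circ> (simple_transp i \<circ> (simple_transp (Suc i) \<circ> f))"
  by (auto simp: simple_transp_def transpose_def fun_eq_iff)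

lemma word_perm_Nil [simp]: "word_perm [] = id"
  and word_perm_Cons [simp]: "word_perm (i # u) = simple_transp i \<circ> word_perm u"
  by (simp_all add: word_perm_def)

lemma word_perm_append: "word_perm (u @ v) = word_perm u \<circ> word_perm v"
  by (induction u) auto

lemma bij_word_perm: "bij (word_perm u)"
  by (induction u) (simp_all only: word_perm_Nil word_perm_Cons bij_id bij_comp bij_simple_transp)

lemma gen_word_Nil [simp]: "gen_word n []"
  and gen_word_Cons [simp]: "gen_word n (i # u) \<longleftrightarrow> i \<in> {1..<n} \<and> gen_word n u"
  by (auto simp: gen_word_def)

lemma word_perm_permutes: "gen_word n u \<Longrightarrow> word_perm u permutes {1..n}"
  by (induction u) (simp_all only: word_perm_Nil word_perm_Cons gen_word_Nil gen_word_Cons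
    permutes_id permutes_compose simple_transp_permutes)

section \<open>Inversions and descents\<close>

definition inversions :: "(nat \<Rightarrow> nat) \<Rightarrow> nat set set" where
  "inversions f = {{a, b} | a b. a < b \<and> f b < f a}"

definition inv_count :: "(nat \<Rightarrow> nat) \<Rightarrow> nat" where
  "inv_count f = card (inversions f)"

text \<open>\<open>s\<^sub>i\<close> is a left descent of \<open>f\<close>: the value \<open>i + 1\<close> precedes \<open>i\<close> in the one-line notation.\<close>
definition descent :: "(nat \<Rightarrow> nat) \<Rightarrow> nat \<Rightarrow> bool" where
  "descent f i \<longleftrightarrow> (\<exists>a b. b < a \<and> f a = i \<and> f b = Suc i)"

lemma permutes_le_max: "f x \<le> max x n" if "f permutes {1..n}" for f :: "nat \<Rightarrow> nat"
proof (cases "x \<in> {1..n}")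
  case True
  then show ?thesis using permutes_in_image[of f "{1..n}" x] that by (auto intro: max.coboundedI2)
next
  case False
  then show ?thesis using permutes_not_in[OF that False] by simp
qed

lemma inversions_subset: "f permutes {1..n} \<Longrightarrow> inversions f \<subseteq> Pow {..n}"
proof
  fix X assume f: "f permutes {1..n}" and "X \<in> inversions f"
  then obtain a b where X: "X = {a, b}" "a < b" "f b < f a" by (auto simp: inversions_def)
  have "b \<le> n"
  proof (rule ccontr)
    assume "\<not> b \<le> n"
    then have "f b = b" "f a \<le> max a n" using permutes_not_in[OF f] permutes_le_max[OF f] by auto
    then show False using X(2,3) \<open>\<not> b \<le> n\<close> by (simp add: max_def split: if_splits)
  qed
  then show "X \<in> Pow {..n}" using X(1,2) by auto
qed

lemma finite_inversions: "f permutes {1..n} \<Longrightarrow> finite (inversions f)"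
  by (meson finite_Pow_iff finite_atMost finite_subset inversions_subset)

lemma doubleton_mem_inversions:
  "{a, b} \<in> inversions f \<longleftrightarrow> (a < b \<and> f b < f a) \<or> (b < a \<and> f a < f b)"
  unfolding inversions_def by (auto simp: doubleton_eq_iff)

lemma descent_iff_inv_less: "bij f \<Longrightarrow> descent f i \<longleftrightarrow> inv f (Suc i) < inv f i"
  unfolding descent_def by (metis bij_inv_eq_iff)

lemma inv_simple_transp_comp: "bij f \<Longrightarrow> inv (simple_transp i \<circ> f) = inv f \<circ> simple_transp i"
  by (simp add: o_inv_distrib bij_simple_transp)

lemma descent_simple_transp_comp_iff:
  assumes "bij f"
  shows "descent (simple_transp i \<circ> f) j \<longleftrightarrow>
    inv f (simple_transp i (Suc j)) < inv f (simple_transp i j)"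
  using assms bij_comp[OF assms bij_simple_transp]
  by (simp add: descent_iff_inv_less inv_simple_transp_comp)

lemma descent_simple_transp_comp_self:
  assumes "bij f"
  shows "descent (simple_transp i \<circ> f) i \<longleftrightarrow> \<not> descent f i"
proof -
  have "inv f i \<noteq> inv f (Suc i)" using assms by (metis bij_inv_eq_iff n_not_Suc_n)
  then show ?thesis using assms by (auto simp: descent_simple_transp_comp_iff descent_iff_inv_less)
qed

lemma descent_simple_transp_comp_far:
  "bij f \<Longrightarrow> Suc i < j \<or> Suc j < i \<Longrightarrow> descent f j \<Longrightarrow> descent (simple_transp i \<circ> f) j"
  by (auto simp: descent_simple_transp_comp_iff descent_iff_inv_less)

lemma descent_braid:
  assumes "bij f" "descent f i" "descent f (Suc i)"
  shows "descent (simple_transp i \<circ> f) (Suc i)"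
    and "descent (simple_transp (Suc i) \<circ> (simple_transp i \<circ> f)) i"
  using assms bij_comp[OF assms(1) bij_simple_transp]
  by (simp_all add: descent_simple_transp_comp_iff descent_iff_inv_less inv_simple_transp_comp)

lemma vimage_adjacent_values:
  "bij f \<Longrightarrow> f -` {i, Suc i} = {inv f i, inv f (Suc i)}"
  by (auto simp: bij_inv_eq_iff) (metis bij_inv_eq_iff)+

lemma descent_iff_mem_inversions:
  assumes "bij f"
  shows "descent f i \<longleftrightarrow> f -` {i, Suc i} \<in> inversions f"
proof -
  have "f (inv f x) = x" for x using assms by (simp add: bij_is_surj surj_f_inv_f)
  then show ?thesis using assms
    by (auto simp: vimage_adjacent_values doubleton_mem_inversions descent_iff_inv_less)
qed

lemma simple_transp_less_iff:
  "{x, y} \<noteq> {i, Suc i} \<Longrightarrow> simple_transp i y < simple_transp i x \<longleftrightarrow> y < x"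
  by (auto simp: simple_transp_def transpose_def doubleton_eq_iff)

lemma mem_inversions_simple_transp_comp:
  assumes "inj f" "X \<noteq> f -` {i, Suc i}"
  shows "X \<in> inversions (simple_transp i \<circ> f) \<longleftrightarrow> X \<in> inversions f"
proof -
  have "simple_transp i (f d) < simple_transp i (f c) \<longleftrightarrow> f d < f c" if "X = {c, d}" for c d
  proof (rule simple_transp_less_iff)
    have "f -` {f c, f d} = {c, d}" using assms(1) by (auto simp: inj_eq)
    then show "{f c, f d} \<noteq> {i, Suc i}" using assms(2) that by auto
  qed
  then show ?thesis unfolding inversions_def by auto
qed

lemma inversions_simple_transp_comp:
  assumes "bij f"
  shows "inversions (simple_transp i \<circ> f) =
    (if descent f i then inversions f - {f -` {i, Suc i}} else insert (f -` {i, Suc i}) (inversions f))"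
    (is "_ = ?rhs")
proof (rule set_eqI)
  fix X
  have "(simple_transp i \<circ> f) -` {i, Suc i} = f -` {i, Suc i}"
    by (simp add: vimage_comp[symmetric] vimage_simple_transp insert_commute)
  then have "f -` {i, Suc i} \<in> inversions (simple_transp i \<circ> f) \<longleftrightarrow> \<not> descent f i"
    using assms bij_comp[OF assms bij_simple_transp]
    by (metis descent_iff_mem_inversions descent_simple_transp_comp_self)
  then show "X \<in> inversions (simple_transp i \<circ> f) \<longleftrightarrow> X \<in> ?rhs"
    using mem_inversions_simple_transp_comp[OF bij_is_inj[OF assms], of X i]
      descent_iff_mem_inversions[OF assms]
    by (cases "X = f -` {i, Suc i}") auto
qed

lemma inv_count_id [simp]: "inv_count id = 0"
proof -
  have "inversions id = {}" by (auto simp: inversions_def)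
  then show ?thesis by (simp add: inv_count_def)
qed

lemma inv_count_simple_transp_comp:
  assumes "f permutes {1..n}"
  shows "descent f i \<Longrightarrow> inv_count (simple_transp i \<circ> f) + 1 = inv_count f"
    and "\<not> descent f i \<Longrightarrow> inv_count (simple_transp i \<circ> f) = inv_count f + 1"
proof -
  have "bij f" using assms permutes_bij by blast
  note inversions = inversions_simple_transp_comp[OF this, of i] descent_iff_mem_inversions[OF this, of i]
  show "descent f i \<Longrightarrow> inv_count (simple_transp i \<circ> f) + 1 = inv_count f"
    using inversions finite_inversions[OF assms] card_Suc_Diff1 unfolding inv_count_def by fastforce
  show "\<not> descent f i \<Longrightarrow> inv_count (simple_transp i \<circ> f) = inv_count f + 1"
    using inversions finite_inversions[OF assms] unfolding inv_count_def by simp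
qed

lemma inv_count_word_perm_le: "gen_word n u \<Longrightarrow> inv_count (word_perm u) \<le> length u"
proof (induction u)
  case Nil
  then show ?case by (simp only: word_perm_Nil inv_count_id)
next
  case (Cons i u)
  have "word_perm u permutes {1..n}" using Cons.prems word_perm_permutes by simp
  then have "inv_count (simple_transp i \<circ> word_perm u) \<le> inv_count (word_perm u) + 1"
    using inv_count_simple_transp_comp by (cases "descent (word_perm u) i") force+
  moreover have "inv_count (word_perm u) \<le> length u" using Cons by simp
  ultimately show ?case by (simp only: word_perm_Cons length_Cons)
qed

lemma permutes_increasing_eq_id:
  fixes g :: "nat \<Rightarrow> nat"
  assumes g: "g permutes {1..n}" and increasing: "\<And>i. 1 \<le> i \<Longrightarrow> i < n \<Longrightarrow> g i < g (Suc i)"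
  shows "g = id"
proof -
  have ge: "k \<le> g k" if "k \<in> {1..n}" for k
    using that
  proof (induction k)
    case (Suc k)
    show ?case
    proof (cases "k = 0")
      case True
      then show ?thesis using permutes_in_image[OF g, of "Suc k"] Suc.prems by auto
    next
      case False
      then show ?thesis using Suc increasing[of k] by fastforce
    qed
  qed simp
  \<comment> \<open>a permutation of \<open>{1..n}\<close> preserves the sum over \<open>{1..n}\<close>, so \<open>k \<le> g k\<close> is an equality\<close>
  have "(\<Sum>k\<in>{1..n}. g k) = (\<Sum>k\<in>{1..n}. k)"
    using sum.reindex_bij_betw[OF permutes_imp_bij[OF g], of "\<lambda>k. k"] .
  then have "g k = k" if "k \<in> {1..n}" for k
    using sum_mono_inv[of "\<lambda>k. k" _ g, OF _ ge that] by simp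
  then show ?thesis using permutes_not_in[OF g] by fastforce
qed

lemma exists_descent:
  assumes f: "f permutes {1..n}" and "f \<noteq> id"
  obtains i where "i \<in> {1..<n}" "descent f i"
proof -
  have "bij f" using f permutes_bij by blast
  have "inv f \<noteq> id" using \<open>f \<noteq> id\<close> \<open>bij f\<close> by (metis inv_id inv_inv_eq)
  then have "\<not> (\<forall>i. 1 \<le> i \<longrightarrow> i < n \<longrightarrow> inv f i < inv f (Suc i))"
    using permutes_increasing_eq_id[OF permutes_inv[OF f]] by blast
  then obtain i where "i \<in> {1..<n}" "\<not> inv f i < inv f (Suc i)" by auto
  moreover have "inv f i \<noteq> inv f (Suc i)" using \<open>bij f\<close> by (metis bij_inv_eq_iff n_not_Suc_n)
  ultimately show ?thesis using that descent_iff_inv_less[OF \<open>bij f\<close>] by simp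
qed

definition reduced :: "nat \<Rightarrow> nat list \<Rightarrow> bool" where
  "reduced n u \<longleftrightarrow> gen_word n u \<and> inv_count (word_perm u) = length u"

lemma reduced_Nil [simp]: "reduced n []"
  by (simp add: reduced_def)

lemma reduced_Cons_iff:
  "reduced n (i # u) \<longleftrightarrow> i \<in> {1..<n} \<and> reduced n u \<and> \<not> descent (word_perm u) i"
proof (cases "gen_word n (i # u)")
  case True
  then have "word_perm u permutes {1..n}" using word_perm_permutes by simp
  note count = inv_count_simple_transp_comp[OF this, of i]
  have "inv_count (word_perm u) \<le> length u" using True inv_count_word_perm_le[of n u] by simp
  then show ?thesis using True count unfolding reduced_def by (cases "descent (word_perm u) i") auto
qed (auto simp: reduced_def)

lemma reduced_Cons_iff_descent:
  "reduced n (i # u) \<longleftrightarrow> i \<in> {1..<n} \<and> reduced n u \<and> descent (word_perm (i # u)) i"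
  using descent_simple_transp_comp_self[OF bij_word_perm] by (simp add: reduced_Cons_iff)

lemma exists_reduced_word:
  "f permutes {1..n} \<Longrightarrow> \<exists>u. reduced n u \<and> word_perm u = f"
proof (induction "inv_count f" arbitrary: f rule: less_induct)
  case less
  show ?case
  proof (cases "f = id")
    case True
    then show ?thesis using reduced_Nil word_perm_Nil by blast
  next
    case False
    then obtain i where i: "i \<in> {1..<n}" "descent f i" using exists_descent[OF less.prems] by blast
    have "simple_transp i \<circ> f permutes {1..n}"
      using permutes_compose[OF less.prems simple_transp_permutes[OF i(1)]] .
    moreover have "inv_count (simple_transp i \<circ> f) < inv_count f"
      using inv_count_simple_transp_comp(1)[OF less.prems i(2)] by simp
    ultimately obtain u where u: "reduced n u" "word_perm u = simple_transp i \<circ> f"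
      using less.hyps by blast
    then have "reduced n (i # u)" "word_perm (i # u) = f"
      using i by (simp_all add: reduced_Cons_iff_descent)
    then show ?thesis by blast
  qed
qed

lemma perm_length_eq_inv_count: "f permutes {1..n} \<Longrightarrow> perm_length n f = inv_count f"
  unfolding perm_length_def
proof (rule Least_equality)
  assume "f permutes {1..n}"
  then obtain u where "reduced n u" "word_perm u = f" using exists_reduced_word by blast
  then show "\<exists>u. gen_word n u \<and> word_perm u = f \<and> length u = inv_count f"
    unfolding reduced_def by auto
qed (use inv_count_word_perm_le in blast)

lemma reduced_words_eq: "w permutes {1..n} \<Longrightarrow> reduced_words n w = {u. reduced n u \<and> word_perm u = w}"
  unfolding reduced_words_def reduced_def by (auto simp: perm_length_eq_inv_count)

section \<open>Matsumoto's theorem\<close>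

definition moves :: "nat list \<Rightarrow> nat list \<Rightarrow> bool" where
  "moves u v \<longleftrightarrow> braid_move u v \<or> comm_move u v"

lemma symp_braid_move: "symp braid_move"
  unfolding braid_move_def by (rule sympI) blast

lemma symp_comm_move: "symp comm_move"
  unfolding comm_move_def by (rule sympI) blast

lemma symp_moves: "symp moves"
  using symp_braid_move symp_comm_move unfolding moves_def by (auto intro: sympI dest: sympD)

lemma comm_move_prefix: "Suc i < j \<or> Suc j < i \<Longrightarrow> comm_move (i # j # x) (j # i # x)"
  unfolding comm_move_def by (intro exI[of _ "[]"] exI[of _ x]) auto

lemma braid_move_prefix: "braid_move (i # Suc i # i # x) (Suc i # i # Suc i # x)"
  unfolding braid_move_def by (intro exI[of _ "[]"] exI[of _ x]) auto

lemma moves_Cons: "moves u v \<Longrightarrow> moves (i # u) (i # v)"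
  unfolding moves_def braid_move_def comm_move_def by (metis append_Cons)

lemma moves_rtranclp_Cons: "moves\<^sup>*\<^sup>* u v \<Longrightarrow> moves\<^sup>*\<^sup>* (i # u) (i # v)"
  by (induction rule: rtranclp_induct) (auto intro: rtranclp.rtrancl_into_rtrancl moves_Cons)

lemma braid_move_word_perm: "braid_move u v \<Longrightarrow> word_perm v = word_perm u"
  unfolding braid_move_def by (auto simp: word_perm_append simple_transp_braid)

lemma comm_move_word_perm: "comm_move u v \<Longrightarrow> word_perm v = word_perm u"
  unfolding comm_move_def by (auto simp: word_perm_append) (metis simple_transp_commute)+

lemma moves_invariants:
  assumes "moves u v"
  shows "word_perm v = word_perm u" "length v = length u" "set v = set u"
  using assms braid_move_word_perm comm_move_word_perm unfolding moves_def
  by (blast, auto simp: braid_move_def comm_move_def)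

lemma moves_reduced: "moves u v \<Longrightarrow> reduced n u \<Longrightarrow> reduced n v"
  using moves_invariants unfolding reduced_def gen_word_def by metis

lemma reduced_length_eq:
  "reduced n u \<Longrightarrow> reduced n v \<Longrightarrow> word_perm u = word_perm v \<Longrightarrow> length u = length v"
  unfolding reduced_def by metis

definition reduced_connected :: "nat \<Rightarrow> nat \<Rightarrow> bool" where
  "reduced_connected n k \<longleftrightarrow> (\<forall>u v. reduced n u \<longrightarrow> reduced n v \<longrightarrow> word_perm u = word_perm v \<longrightarrow>
    length u = k \<longrightarrow> moves\<^sup>*\<^sup>* u v)"

lemma reduced_connectedD:
  "reduced_connected n k \<Longrightarrow> reduced n u \<Longrightarrow> reduced n v \<Longrightarrow> word_perm u = word_perm v \<Longrightarrow>
    length u = k \<Longrightarrow> moves\<^sup>*\<^sup>* u v"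
  unfolding reduced_connected_def by blast

lemma moves_same_first_letter:
  assumes connected: "reduced_connected n k"
    and "reduced n (i # u)" "reduced n (i # v)" "word_perm (i # u) = word_perm (i # v)" "length u = k"
  shows "moves\<^sup>*\<^sup>* (i # u) (i # v)"
proof -
  have "word_perm u = word_perm v"
    using arg_cong[OF assms(4), of "(\<circ>) (simple_transp i)"] by simp
  moreover have "reduced n u" "reduced n v" using assms(2,3) by (simp_all add: reduced_Cons_iff)
  ultimately show ?thesis using reduced_connectedD[OF connected] assms(5) by (metis moves_rtranclp_Cons)
qed

lemma moves_bridge:
  assumes connected: "reduced_connected n k"
    and iu: "reduced n (i # u)" and jv: "reduced n (j # v)"
    and eq: "word_perm (i # u) = word_perm (j # v)" and "length u = k"
    and ip: "reduced n (i # p)" and p_perm: "word_perm (i # p) = word_perm (i # u)"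
    and step: "moves (i # p) (j # q)"
  shows "moves\<^sup>*\<^sup>* (i # u) (j # v)"
proof -
  have jq: "reduced n (j # q)" using moves_reduced[OF step ip] .
  have q_perm: "word_perm (j # q) = word_perm (j # v)" using moves_invariants(1)[OF step] p_perm eq by simp
  have "length (i # p) = length (i # u)" using reduced_length_eq[OF ip iu p_perm] .
  then have "length p = k" "length q = k" using moves_invariants(2)[OF step] \<open>length u = k\<close> by simp_all
  from moves_same_first_letter[OF connected iu ip p_perm[symmetric] \<open>length u = k\<close>]
  have first: "moves\<^sup>*\<^sup>* (i # u) (i # p)" .
  from moves_same_first_letter[OF connected jq jv q_perm \<open>length q = k\<close>]
  have last: "moves\<^sup>*\<^sup>* (j # q) (j # v)" .
  from rtranclp_trans[OF first converse_rtranclp_into_rtranclp[OF step last]]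
  show ?thesis .
qed

lemma moves_far_first_letters:
  assumes connected: "reduced_connected n k"
    and iu: "reduced n (i # u)" and jv: "reduced n (j # v)"
    and eq: "word_perm (i # u) = word_perm (j # v)" and "length u = k"
    and far: "Suc i < j \<or> Suc j < i"
  shows "moves\<^sup>*\<^sup>* (i # u) (j # v)"
proof -
  define W where "W = word_perm (i # u)"
  have i: "i \<in> {1..<n}" and j: "j \<in> {1..<n}" using iu jv by (simp_all add: reduced_Cons_iff)
  have W: "W permutes {1..n}" unfolding W_def using iu word_perm_permutes reduced_def by blast
  have "descent W i" "descent W j" using iu jv eq unfolding W_def by (simp_all add: reduced_Cons_iff_descent)
  then have "descent (simple_transp i \<circ> W) j"
    using descent_simple_transp_comp_far[OF permutes_bij[OF W] far] by blast
  have "simple_transp j \<circ> (simple_transp i \<circ> W) permutes {1..n}"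
    using W i j by (intro permutes_compose simple_transp_permutes)
  then obtain x where "reduced n x" "word_perm x = simple_transp j \<circ> (simple_transp i \<circ> W)"
    using exists_reduced_word by blast
  then have "reduced n (i # j # x)" and "word_perm (i # j # x) = word_perm (i # u)"
    using i j \<open>descent W i\<close> \<open>descent (simple_transp i \<circ> W) j\<close>
    by (simp_all add: reduced_Cons_iff_descent W_def)
  moreover have "moves (i # j # x) (j # i # x)"
    using comm_move_prefix[OF far] unfolding moves_def ..
  ultimately show ?thesis by (rule moves_bridge[OF connected iu jv eq \<open>length u = k\<close>])
qed

lemma moves_adjacent_first_letters:
  assumes connected: "reduced_connected n k"
    and iu: "reduced n (i # u)" and jv: "reduced n (Suc i # v)"
    and eq: "word_perm (i # u) = word_perm (Suc i # v)" and "length u = k"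
  shows "moves\<^sup>*\<^sup>* (i # u) (Suc i # v)"
proof -
  define W where "W = word_perm (i # u)"
  have i: "i \<in> {1..<n}" and j: "Suc i \<in> {1..<n}" using iu jv by (simp_all add: reduced_Cons_iff)
  have W: "W permutes {1..n}" unfolding W_def using iu word_perm_permutes reduced_def by blast
  have "descent W i" "descent W (Suc i)"
    using iu jv eq unfolding W_def by (simp_all add: reduced_Cons_iff_descent)
  note descents = descent_braid[OF permutes_bij[OF W] this]
  have "simple_transp i \<circ> (simple_transp (Suc i) \<circ> (simple_transp i \<circ> W)) permutes {1..n}"
    using W i j by (intro permutes_compose simple_transp_permutes)
  then obtain x where "reduced n x"
      "word_perm x = simple_transp i \<circ> (simple_transp (Suc i) \<circ> (simple_transp i \<circ> W))"
    using exists_reduced_word by blast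
  then have "reduced n (i # Suc i # i # x)" and "word_perm (i # Suc i # i # x) = word_perm (i # u)"
    using i j \<open>descent W i\<close> descents by (simp_all add: reduced_Cons_iff_descent W_def)
  moreover have "moves (i # Suc i # i # x) (Suc i # i # Suc i # x)"
    using braid_move_prefix unfolding moves_def ..
  ultimately show ?thesis by (rule moves_bridge[OF connected iu jv eq \<open>length u = k\<close>])
qed

lemma reduced_connected_all: "reduced_connected n k"
proof (induction k)
  case 0
  show ?case unfolding reduced_connected_def
  proof (intro allI impI)
    fix u v assume "reduced n u" "reduced n v" "word_perm u = word_perm v" "length u = 0"
    then show "moves\<^sup>*\<^sup>* u v" using reduced_length_eq[of n u v] by simp
  qed
next
  case (Suc k)
  show ?case unfolding reduced_connected_def
  proof (intro allI impI)
    fix u v assume prems: "reduced n u" "reduced n v" "word_perm u = word_perm v" "length u = Suc k"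
    have "length v = Suc k" using reduced_length_eq[OF prems(1-3)] prems(4) by simp
    then obtain i u' j v' where u: "u = i # u'" and v: "v = j # v'" and "length u' = k" "length v' = k"
      using prems(4) by (metis Suc_length_conv)
    note prems = prems(1-3)[unfolded u v]
    consider "i = j" | "Suc i < j \<or> Suc j < i" | "j = Suc i" | "i = Suc j" by linarith
    then have "moves\<^sup>*\<^sup>* (i # u') (j # v')"
    proof cases
      case 1
      from moves_same_first_letter[OF Suc.IH prems[unfolded 1] \<open>length u' = k\<close>]
      show ?thesis unfolding 1 .
    next
      case 2
      from moves_far_first_letters[OF Suc.IH prems \<open>length u' = k\<close> this]
      show ?thesis .
    next
      case 3
      from moves_adjacent_first_letters[OF Suc.IH prems[unfolded 3] \<open>length u' = k\<close>]
      show ?thesis unfolding 3 .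
    next
      case 4
      from moves_adjacent_first_letters[OF Suc.IH prems(2,1)[unfolded 4] prems(3)[unfolded 4, symmetric]
          \<open>length v' = k\<close>]
      have "moves\<^sup>*\<^sup>* (j # v') (i # u')" unfolding 4 .
      then show ?thesis using sympD[OF symp_rtranclp[OF symp_moves]] by blast
    qed
    then show "moves\<^sup>*\<^sup>* u v" unfolding u v .
  qed
qed

theorem matsumoto:
  "reduced n u \<Longrightarrow> reduced n v \<Longrightarrow> word_perm u = word_perm v \<Longrightarrow> moves\<^sup>*\<^sup>* u v"
  using reduced_connectedD[OF reduced_connected_all] by blast

section \<open>Inversion labels\<close>

text \<open>Each letter \<open>i\<close> is labelled by the inversion that \<open>s\<^sub>i\<close> adds to the permutation of the suffix
  following it, composed with \<open>g\<close>; only \<open>g = id\<close> matters, general \<open>g\<close> serves the inductions.\<close>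
fun inversion_labels :: "(nat \<Rightarrow> nat) \<Rightarrow> nat list \<Rightarrow> nat set list" where
  "inversion_labels g [] = []"
| "inversion_labels g (i # u) = (word_perm u \<circ> g) -` {i, Suc i} # inversion_labels g u"

lemma inversion_labels_append:
  "inversion_labels g (x @ z) = inversion_labels (word_perm z \<circ> g) x @ inversion_labels g z"
  by (induction x) (auto simp: word_perm_append comp_assoc)

lemma length_inversion_labels [simp]: "length (inversion_labels g u) = length u"
  by (induction u) auto

lemma inversion_labels_inj: "bij g \<Longrightarrow> inversion_labels g u = inversion_labels g v \<Longrightarrow> u = v"
proof (induction u arbitrary: g v rule: rev_induct)
  case Nil
  then show ?case by (cases v) auto
next
  case (snoc i u)
  have "length v = Suc (length u)"
    using length_inversion_labels[of g v] length_inversion_labels[of g "u @ [i]"] snoc.prems(2)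
    by simp
  then obtain v' j where v: "v = v' @ [j]" by (cases v rule: rev_exhaust) auto
  have labels: "inversion_labels (simple_transp i \<circ> g) u @ [g -` {i, Suc i}] =
      inversion_labels (simple_transp j \<circ> g) v' @ [g -` {j, Suc j}]"
    using snoc.prems(2) unfolding v inversion_labels_append by simp
  then have "g ` (g -` {i, Suc i}) = g ` (g -` {j, Suc j})" by simp
  then have "{i, Suc i} = {j, Suc j}" using surj_image_vimage_eq[OF bij_is_surj[OF snoc.prems(1)]] by simp
  then have "i = j" by (auto simp: doubleton_eq_iff)
  moreover have "bij (simple_transp i \<circ> g)" using snoc.prems(1) bij_simple_transp bij_comp by blast
  ultimately show ?case using snoc.IH labels v by simp
qed

lemma reduced_inversion_labels:
  "reduced n u \<Longrightarrow> distinct (inversion_labels id u) \<and> set (inversion_labels id u) = inversions (word_perm u)"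
proof (induction u)
  case Nil
  have "inversions id = {}" by (auto simp: inversions_def)
  then show ?case by (simp add: id_def)
next
  case (Cons i u)
  have "reduced n u" and descent: "\<not> descent (word_perm u) i"
    using Cons.prems by (simp_all add: reduced_Cons_iff)
  note inversions = inversions_simple_transp_comp[OF bij_word_perm, of i u]
    descent_iff_mem_inversions[OF bij_word_perm, of u i]
  show ?case using Cons.IH[OF \<open>reduced n u\<close>] descent inversions by (simp add: comp_def)
qed

fun ordered_pairs :: "'a list \<Rightarrow> ('a \<times> 'a) set" where
  "ordered_pairs [] = {}"
| "ordered_pairs (x # xs) = {x} \<times> set xs \<union> ordered_pairs xs"

lemma ordered_pairs_append:
  "ordered_pairs (xs @ ys) = ordered_pairs xs \<union> set xs \<times> set ys \<union> ordered_pairs ys"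
  by (induction xs) auto

lemma ordered_pairs_subset: "ordered_pairs xs \<subseteq> set xs \<times> set xs"
  by (induction xs) auto

lemma distinct_eq_if_ordered_pairs_eq:
  "distinct xs \<Longrightarrow> distinct ys \<Longrightarrow> set xs = set ys \<Longrightarrow> ordered_pairs xs = ordered_pairs ys \<Longrightarrow> xs = ys"
proof (induction xs arbitrary: ys)
  case (Cons x xs)
  obtain y ys' where ys: "ys = y # ys'" using Cons.prems(3) by (cases ys) auto
  have "x = y"
  proof (rule ccontr)
    assume "x \<noteq> y"
    then have "(x, y) \<in> ordered_pairs ys'" using Cons.prems(3,4) ys by auto
    then show False using Cons.prems(2) ys ordered_pairs_subset by fastforce
  qed
  have "ordered_pairs xs = {p \<in> ordered_pairs (x # xs). fst p \<noteq> x}"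
    using Cons.prems(1) ordered_pairs_subset[of xs] by auto
  moreover have "ordered_pairs ys' = {p \<in> ordered_pairs ys. fst p \<noteq> x}"
    using Cons.prems(2) ordered_pairs_subset[of ys'] ys \<open>x = y\<close> by auto
  ultimately have "ordered_pairs xs = ordered_pairs ys'" by (simp only: Cons.prems(4))
  moreover have "set xs = set ys'" using Cons.prems ys \<open>x = y\<close> by auto
  ultimately show ?case using Cons ys \<open>x = y\<close> by simp
qed simp

definition meeting_pairs :: "'a set list \<Rightarrow> ('a set \<times> 'a set) set" where
  "meeting_pairs xs = {p \<in> ordered_pairs xs. fst p \<inter> snd p \<noteq> {}}"

definition disjoint_pairs :: "'a set list \<Rightarrow> ('a set \<times> 'a set) set" where
  "disjoint_pairs xs = {p \<in> ordered_pairs xs. fst p \<inter> snd p = {}}"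

lemma meeting_pairs_swap:
  assumes "A \<inter> B = {}"
  shows "meeting_pairs (xs @ [A, B] @ ys) = meeting_pairs (xs @ [B, A] @ ys)"
proof -
  define common where
    "common = ordered_pairs xs \<union> set xs \<times> ({A, B} \<union> set ys) \<union> {A, B} \<times> set ys \<union> ordered_pairs ys"
  have "ordered_pairs (xs @ [A, B] @ ys) = insert (A, B) common"
    "ordered_pairs (xs @ [B, A] @ ys) = insert (B, A) common"
    unfolding common_def ordered_pairs_append by auto
  then show ?thesis using assms unfolding meeting_pairs_def by auto
qed

lemma disjoint_pairs_reverse3:
  assumes "A \<inter> B \<noteq> {}" "A \<inter> C \<noteq> {}" "B \<inter> C \<noteq> {}"
  shows "disjoint_pairs (xs @ [A, B, C] @ ys) = disjoint_pairs (xs @ [C, B, A] @ ys)"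
proof -
  define common where
    "common = ordered_pairs xs \<union> set xs \<times> ({A, B, C} \<union> set ys) \<union> {A, B, C} \<times> set ys \<union> ordered_pairs ys"
  have "ordered_pairs (xs @ [A, B, C] @ ys) = {(A, B), (A, C), (B, C)} \<union> common"
    "ordered_pairs (xs @ [C, B, A] @ ys) = {(C, B), (C, A), (B, A)} \<union> common"
    unfolding common_def ordered_pairs_append by auto
  moreover have "{p \<in> X \<union> common. fst p \<inter> snd p = {}} = {p \<in> common. fst p \<inter> snd p = {}}"
    if "\<forall>p \<in> X. fst p \<inter> snd p \<noteq> {}" for X
    using that by blast
  moreover have "\<forall>p \<in> {(A, B), (A, C), (B, C)}. fst p \<inter> snd p \<noteq> {}"
    "\<forall>p \<in> {(C, B), (C, A), (B, A)}. fst p \<inter> snd p \<noteq> {}"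
    using assms by (auto simp: Int_commute)
  ultimately show ?thesis unfolding disjoint_pairs_def by presburger
qed

lemma inversion_labels_Cons_Cons:
  "inversion_labels g (i # j # y) =
    (word_perm y \<circ> g) -` (simple_transp j -` {i, Suc i}) # (word_perm y \<circ> g) -` {j, Suc j} #
    inversion_labels g y"
  by (simp add: vimage_comp comp_assoc)

lemma comm_move_inversion_labels:
  assumes "comm_move u v"
  shows "meeting_pairs (inversion_labels g u) = meeting_pairs (inversion_labels g v)"
    and "set (inversion_labels g u) = set (inversion_labels g v)"
proof -
  obtain x y i j where far: "Suc i < j \<or> Suc j < i" and u: "u = x @ [i, j] @ y" and v: "v = x @ [j, i] @ y"
    using assms unfolding comm_move_def by blast
  define Y where "Y = word_perm y \<circ> g"
  define X where "X = inversion_labels (word_perm ([i, j] @ y) \<circ> g) x"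
  have "word_perm ([j, i] @ y) = word_perm ([i, j] @ y)"
    using simple_transp_commute[OF far, of "word_perm y"] by simp
  moreover have "simple_transp j -` {i, Suc i} = {i, Suc i}" "simple_transp i -` {j, Suc j} = {j, Suc j}"
    using far by (auto simp: vimage_simple_transp)
  ultimately have "inversion_labels g u = X @ [Y -` {i, Suc i}, Y -` {j, Suc j}] @ inversion_labels g y"
    "inversion_labels g v = X @ [Y -` {j, Suc j}, Y -` {i, Suc i}] @ inversion_labels g y"
    unfolding u v X_def Y_def inversion_labels_append by (simp_all only: inversion_labels_Cons_Cons) simp_all
  moreover have "Y -` {i, Suc i} \<inter> Y -` {j, Suc j} = {}" using far by auto
  ultimately show "meeting_pairs (inversion_labels g u) = meeting_pairs (inversion_labels g v)"
    "set (inversion_labels g u) = set (inversion_labels g v)"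
    using meeting_pairs_swap[of "Y -` {i, Suc i}" "Y -` {j, Suc j}" X "inversion_labels g y"]
    by auto
qed

lemma braid_move_inversion_labels:
  assumes "braid_move u v" "bij g"
  shows "disjoint_pairs (inversion_labels g u) = disjoint_pairs (inversion_labels g v)"
proof -
  have braid: "disjoint_pairs (inversion_labels g (x @ [i, Suc i, i] @ y)) =
    disjoint_pairs (inversion_labels g (x @ [Suc i, i, Suc i] @ y))" for x y i
  proof -
    define Y where "Y = word_perm y \<circ> g"
    define X where "X = inversion_labels (word_perm ([i, Suc i, i] @ y) \<circ> g) x"
    have "word_perm ([Suc i, i, Suc i] @ y) = word_perm ([i, Suc i, i] @ y)"
      using simple_transp_braid[of i "word_perm y"] by simp
    then have labels: "inversion_labels g (x @ [i, Suc i, i] @ y) =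
        X @ [Y -` {Suc i, Suc (Suc i)}, Y -` {i, Suc (Suc i)}, Y -` {i, Suc i}] @ inversion_labels g y"
      "inversion_labels g (x @ [Suc i, i, Suc i] @ y) =
        X @ [Y -` {i, Suc i}, Y -` {i, Suc (Suc i)}, Y -` {Suc i, Suc (Suc i)}] @ inversion_labels g y"
      unfolding X_def Y_def inversion_labels_append
      by (simp_all add: vimage_comp[symmetric] vimage_simple_transp insert_commute)
    have "surj Y" unfolding Y_def using bij_comp[OF assms(2) bij_word_perm] by (rule bij_is_surj)
    then have "Y -` {c} \<noteq> {}" for c by (metis empty_iff surj_def vimage_singleton_eq)
    then have "Y -` {Suc i, Suc (Suc i)} \<inter> Y -` {i, Suc (Suc i)} \<noteq> {}"
      "Y -` {Suc i, Suc (Suc i)} \<inter> Y -` {i, Suc i} \<noteq> {}"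
      "Y -` {i, Suc (Suc i)} \<inter> Y -` {i, Suc i} \<noteq> {}"
      by blast+
    from disjoint_pairs_reverse3[OF this] show ?thesis unfolding labels .
  qed
  show ?thesis using assms(1) braid[symmetric] braid unfolding braid_move_def by auto
qed

lemma comm_moves_inversion_labels:
  assumes "comm_move\<^sup>*\<^sup>* u v"
  shows "meeting_pairs (inversion_labels g u) = meeting_pairs (inversion_labels g v) \<and>
    set (inversion_labels g u) = set (inversion_labels g v)"
  using assms by induction (simp_all add: comm_move_inversion_labels)

lemma braid_moves_inversion_labels:
  assumes "braid_move\<^sup>*\<^sup>* u v" "bij g"
  shows "disjoint_pairs (inversion_labels g u) = disjoint_pairs (inversion_labels g v)"
  using assms by induction (simp_all add: braid_move_inversion_labels)

lemma ordered_pairs_eq_meeting_Un_disjoint: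
  "ordered_pairs xs = meeting_pairs xs \<union> disjoint_pairs xs"
  unfolding meeting_pairs_def disjoint_pairs_def by auto

theorem reduced_eq_if_braid_and_comm:
  assumes "reduced n u" "reduced n v" "braid_move\<^sup>*\<^sup>* u v" "comm_move\<^sup>*\<^sup>* u v"
  shows "u = v"
proof -
  have "set (inversion_labels id u) = set (inversion_labels id v)"
    and "ordered_pairs (inversion_labels id u) = ordered_pairs (inversion_labels id v)"
    using comm_moves_inversion_labels[OF assms(4)] braid_moves_inversion_labels[OF assms(3) bij_id]
    by (simp_all add: ordered_pairs_eq_meeting_Un_disjoint)
  then have "inversion_labels id u = inversion_labels id v"
    using reduced_inversion_labels assms(1,2) distinct_eq_if_ordered_pairs_eq by blast
  then show ?thesis using inversion_labels_inj[OF bij_id] by blast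
qed

section \<open>Counting classes\<close>

lemma rtranclp_leaves_set:
  assumes "P\<^sup>*\<^sup>* x y" "x \<in> S" "y \<notin> S"
  obtains a b where "P a b" "a \<in> S" "b \<notin> S"
  using assms by (induction rule: rtranclp_induct) blast+

lemma card_images_insert_le:
  assumes "finite S" "f a \<in> f ` S \<or> g a \<in> g ` S"
  shows "card (f ` insert a S) + card (g ` insert a S) \<le> card (f ` S) + card (g ` S) + 1"
  using assms by (auto simp: card_insert_if)

text \<open>The vertex bound of a connected bipartite multigraph whose edges \<open>x \<in> R\<close> join \<open>f x\<close> to \<open>g x\<close>.\<close>
lemma card_image_add_card_image_le:
  assumes "finite R"
    and connected: "\<And>x y. x \<in> R \<Longrightarrow> y \<in> R \<Longrightarrow> E\<^sup>*\<^sup>* x y"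
    and E: "\<And>a b. a \<in> R \<Longrightarrow> E a b \<Longrightarrow> b \<in> R \<and> (f a = f b \<or> g a = g b)"
  shows "card (f ` R) + card (g ` R) \<le> card R + 1"
proof (cases "R = {}")
  case False
  have "\<exists>S \<subseteq> R. card S = Suc k \<and> card (f ` S) + card (g ` S) \<le> Suc k + 1" if "k < card R" for k
    using that
  proof (induction k)
    case 0
    then show ?case using False by (auto intro!: exI[of _ "{SOME x. x \<in> R}"] some_in_eq[THEN iffD2])
  next
    case (Suc k)
    then obtain S where S: "S \<subseteq> R" "card S = Suc k" "card (f ` S) + card (g ` S) \<le> Suc k + 1"
      by auto
    have "finite S" using S(1) \<open>finite R\<close> finite_subset by blast
    obtain x where "x \<in> S" using S(2) by fastforce
    have "S \<noteq> R" using S(2) Suc.prems by auto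
    then obtain y where "y \<in> R" "y \<notin> S" using S(1) by blast
    obtain a b where "E a b" "a \<in> S" "b \<notin> S"
      using rtranclp_leaves_set[OF connected] \<open>x \<in> S\<close> \<open>y \<in> R\<close> \<open>y \<notin> S\<close> S(1) by blast
    have "b \<in> R" and "f a = f b \<or> g a = g b" using E \<open>E a b\<close> \<open>a \<in> S\<close> S(1) by blast+
    then have "f b \<in> f ` S \<or> g b \<in> g ` S" using \<open>a \<in> S\<close> by (metis image_eqI)
    from card_images_insert_le[OF \<open>finite S\<close> this]
    have "card (f ` insert b S) + card (g ` insert b S) \<le> Suc (Suc k) + 1" using S(3) by simp
    moreover have "insert b S \<subseteq> R" "card (insert b S) = Suc (Suc k)"
      using S(1,2) \<open>finite S\<close> \<open>b \<in> R\<close> \<open>b \<notin> S\<close> by simp_all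
    ultimately show ?case by blast
  qed
  then obtain S where "S \<subseteq> R" "card S = card R" "card (f ` S) + card (g ` S) \<le> card R + 1"
    using False \<open>finite R\<close> by (metis Suc_pred card_gt_0_iff lessI)
  then show ?thesis using card_subset_eq[OF \<open>finite R\<close>] by metis
qed simp

lemma quotient_eq_image: "A // r = (\<lambda>x. r `` {x}) ` A"
  by (auto simp: quotient_def)

lemma equiv_rtranclp: "symp P \<Longrightarrow> equiv UNIV {(x, y). P\<^sup>*\<^sup>* x y}"
  unfolding equivp_equiv by (simp add: equivp_rtranclp)

lemma card_le_card_quotient_mult:
  assumes "finite A" "equiv UNIV r" "equiv UNIV s"
    and unique: "\<And>x y. x \<in> A \<Longrightarrow> y \<in> A \<Longrightarrow> (x, y) \<in> r \<Longrightarrow> (x, y) \<in> s \<Longrightarrow> x = y"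
  shows "card A \<le> card (A // r) * card (A // s)"
proof -
  have "inj_on (\<lambda>x. (r `` {x}, s `` {x})) A"
    using unique eq_equiv_class_iff[OF assms(2)] eq_equiv_class_iff[OF assms(3)] by (auto intro!: inj_onI)
  then have "card A = card ((\<lambda>x. (r `` {x}, s `` {x})) ` A)" by (simp add: card_image)
  also have "\<dots> \<le> card (A // r \<times> A // s)"
    using assms(1) by (intro card_mono) (auto simp: quotient_eq_image)
  also have "\<dots> = card (A // r) * card (A // s)" by (rule card_cartesian_product)
  finally show ?thesis .
qed

lemma card_quotient_add_le:
  assumes "finite A" "equiv UNIV r" "equiv UNIV s"
    and connected: "\<And>x y. x \<in> A \<Longrightarrow> y \<in> A \<Longrightarrow> E\<^sup>*\<^sup>* x y"
    and E: "\<And>x y. x \<in> A \<Longrightarrow> E x y \<Longrightarrow> y \<in> A \<and> ((x, y) \<in> r \<or> (x, y) \<in> s)"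
  shows "card (A // r) + card (A // s) \<le> card A + 1"
  unfolding quotient_eq_image
proof (rule card_image_add_card_image_le[OF assms(1) connected])
  fix x y assume "x \<in> A" "E x y"
  then show "y \<in> A \<and> (r `` {x} = r `` {y} \<or> s `` {x} = s `` {y})"
    using E eq_equiv_class_iff[OF assms(2)] eq_equiv_class_iff[OF assms(3)] by blast
qed

lemma finite_reduced_words: "finite (reduced_words n w)"
proof (rule finite_subset)
  show "reduced_words n w \<subseteq> {u. set u \<subseteq> {1..<n} \<and> length u = perm_length n w}"
    unfolding reduced_words_def gen_word_def by auto
  show "finite {u. set u \<subseteq> {1..<n} \<and> length u = perm_length n w}"
    by (rule finite_lists_length_eq) simp
qed

theorem theorem4p6:
  fixes n :: nat and w :: "nat \<Rightarrow> nat"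
  assumes "w permutes {1..n}"
  shows "card (braid_classes n w) + card (comm_classes n w) - 1 \<le> card (reduced_words n w)
       \<and> card (reduced_words n w) \<le> card (braid_classes n w) * card (comm_classes n w)"
proof -
  let ?R = "reduced_words n w"
  define braid where "braid = {(u, v). braid_move\<^sup>*\<^sup>* u v}"
  define comm where "comm = {(u, v). comm_move\<^sup>*\<^sup>* u v}"
  have R: "?R = {u. reduced n u \<and> word_perm u = w}" using reduced_words_eq[OF assms] .
  have equivs: "equiv UNIV braid" "equiv UNIV comm"
    unfolding braid_def comm_def using equiv_rtranclp symp_braid_move symp_comm_move by blast+
  have "card ?R \<le> card (?R // braid) * card (?R // comm)"
    by (rule card_le_card_quotient_mult[OF finite_reduced_words equivs])
      (use reduced_eq_if_braid_and_comm in \<open>auto simp: R braid_def comm_def\<close>)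
  moreover have "card (?R // braid) + card (?R // comm) \<le> card ?R + 1"
  proof (rule card_quotient_add_le[OF finite_reduced_words equivs])
    show "moves\<^sup>*\<^sup>* u v" if "u \<in> ?R" "v \<in> ?R" for u v
      using matsumoto that unfolding R by auto
    show "v \<in> ?R \<and> ((u, v) \<in> braid \<or> (u, v) \<in> comm)" if "u \<in> ?R" "moves u v" for u v
      using that moves_reduced moves_invariants(1) unfolding R braid_def comm_def moves_def by auto
  qed
  ultimately show ?thesis unfolding braid_classes_def comm_classes_def braid_def comm_def by linarith
qed

end
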